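(* Let $\mathfrak g$ be a unimodular Lie algebra with a Hermitian structure $(J,g)$ of complex dimension $n$. Then $g$ is Gauduchon, i.e. $\partial\bar\partial(\omega^{n-1})=0$, where $\omega$ is the Kähler form of $g$.
   Context: A Hermitian structure on a real Lie algebra $\mathfrak g$ of dimension $2n$ is an integrable almost complex structure $J$ with a $J$-invariant inner product $g$. With a unitary frame $e_1,\dots,e_n$ of $\mathfrak g^{1,0}=\{x-\sqrt{-1}Jx\}$ ($g$ extended bilinearly, $g(e_i,\bar e_j)=\delta_{ij}$) and dual coframe $\varphi_i$, $\omega=\sqrt{-1}\sum_i\varphi_i\wedge\bar\varphi_i$; $d$ is the Chevalley–Eilenberg differential on left-invariant forms and $d=\partial+\bar\partial$ its type decomposition. Unimodular: $\operatorname{tr}\mathrm{ad}_x=0$ for all $x$. *)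

theory Defs
  imports "HOL-Analysis.Analysis" "HOL-Combinatorics.Permutations"
begin

text \<open>Complexified vectors are complex^'m.  Left-invariant complex k-forms are
  functions on lists of complexified vectors (meaningful on lists of length k).\<close>

definition is_lie_algebra :: "(real^'m \<Rightarrow> real^'m \<Rightarrow> real^'m) \<Rightarrow> bool" where
  "is_lie_algebra B \<longleftrightarrow> bilinear B \<and> (\<forall>x y. B x y = - B y x) \<and>
     (\<forall>x y z. B x (B y z) + B y (B z x) + B z (B x y) = 0)"

definition unimodular :: "(real^'m \<Rightarrow> real^'m \<Rightarrow> real^'m) \<Rightarrow> bool" where
  "unimodular B \<longleftrightarrow> (\<forall>x. trace (matrix (B x)) = 0)"

text \<open>Hermitian structure: integrable almost complex structure J and J-invariant inner product g.\<close>
definition hermitian_structure ::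
  "(real^'m \<Rightarrow> real^'m \<Rightarrow> real^'m) \<Rightarrow> (real^'m \<Rightarrow> real^'m) \<Rightarrow> (real^'m \<Rightarrow> real^'m \<Rightarrow> real) \<Rightarrow> bool" where
  "hermitian_structure B J g \<longleftrightarrow>
     linear J \<and> (\<forall>x. J (J x) = - x) \<and>
     (\<forall>x y. B (J x) (J y) - J (B (J x) y) - J (B x (J y)) - B x y = 0) \<and>
     bilinear g \<and> (\<forall>x y. g x y = g y x) \<and> (\<forall>x. x \<noteq> 0 \<longrightarrow> g x x > 0) \<and>
     (\<forall>x y. g (J x) (J y) = g x y)"

definition cre :: "complex^'m \<Rightarrow> real^'m" where "cre x = (\<chi> i. Re (x $ i))"
definition cim :: "complex^'m \<Rightarrow> real^'m" where "cim x = (\<chi> i. Im (x $ i))"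
definition cpx :: "real^'m \<Rightarrow> real^'m \<Rightarrow> complex^'m" where
  "cpx a b = (\<chi> i. Complex (a $ i) (b $ i))"

definition brC :: "(real^'m \<Rightarrow> real^'m \<Rightarrow> real^'m) \<Rightarrow> complex^'m \<Rightarrow> complex^'m \<Rightarrow> complex^'m" where
  "brC B x y = cpx (B (cre x) (cre y) - B (cim x) (cim y)) (B (cre x) (cim y) + B (cim x) (cre y))"

definition JC :: "(real^'m \<Rightarrow> real^'m) \<Rightarrow> complex^'m \<Rightarrow> complex^'m" where
  "JC J x = cpx (J (cre x)) (J (cim x))"

definition gC :: "(real^'m \<Rightarrow> real^'m \<Rightarrow> real) \<Rightarrow> complex^'m \<Rightarrow> complex^'m \<Rightarrow> complex" where
  "gC g x y = Complex (g (cre x) (cre y) - g (cim x) (cim y)) (g (cre x) (cim y) + g (cim x) (cre y))"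

type_synonym 'm form = "(complex^'m) list \<Rightarrow> complex"

definition kform :: "(real^'m \<Rightarrow> real^'m) \<Rightarrow> (real^'m \<Rightarrow> real^'m \<Rightarrow> real) \<Rightarrow> 'm form" where
  "kform J g xs = gC g (JC J (xs ! 0)) (xs ! 1)"

definition wedge :: "nat \<Rightarrow> nat \<Rightarrow> 'm form \<Rightarrow> 'm form \<Rightarrow> 'm form" where
  "wedge p q \<alpha> \<beta> xs = (1 / of_nat (fact p * fact q)) *
     (\<Sum>\<sigma>\<in>{\<sigma>. \<sigma> permutes {..<p+q}}. of_int (sign \<sigma>) *
        \<alpha> (map (\<lambda>i. xs ! \<sigma> i) [0..<p]) * \<beta> (map (\<lambda>i. xs ! \<sigma> i) [p..<p+q]))"

fun kpow :: "(real^'m \<Rightarrow> real^'m) \<Rightarrow> (real^'m \<Rightarrow> real^'m \<Rightarrow> real) \<Rightarrow> nat \<Rightarrow> 'm form" where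
  "kpow J g 0 = (\<lambda>xs. 1)"
| "kpow J g (Suc j) = wedge 2 (2 * j) (kform J g) (kpow J g j)"

definition dCE :: "(real^'m \<Rightarrow> real^'m \<Rightarrow> real^'m) \<Rightarrow> nat \<Rightarrow> 'm form \<Rightarrow> 'm form" where
  "dCE B k \<alpha> xs = (\<Sum>i<k+1. \<Sum>j\<in>{i<..<k+1}. (-1) ^ (i + j) *
      \<alpha> (brC B (xs ! i) (xs ! j) # map (\<lambda>l. xs ! l) (filter (\<lambda>l. l \<noteq> i \<and> l \<noteq> j) [0..<k+1])))"

definition P10 :: "(real^'m \<Rightarrow> real^'m) \<Rightarrow> complex^'m \<Rightarrow> complex^'m" where
  "P10 J x = (1/2 :: complex) *s x - (\<i>/2) *s JC J x"
definition P01 :: "(real^'m \<Rightarrow> real^'m) \<Rightarrow> complex^'m \<Rightarrow> complex^'m" where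
  "P01 J x = (1/2 :: complex) *s x + (\<i>/2) *s JC J x"

text \<open>The (p, k-p) component of a k-form.\<close>
definition tcomp :: "(real^'m \<Rightarrow> real^'m) \<Rightarrow> nat \<Rightarrow> 'm form \<Rightarrow> 'm form" where
  "tcomp J p \<alpha> xs = (\<Sum>S\<in>{S. S \<subseteq> {..<length xs} \<and> card S = p}.
      \<alpha> (map (\<lambda>l. if l \<in> S then P10 J (xs ! l) else P01 J (xs ! l)) [0..<length xs]))"

text \<open>del and delbar on k-forms: (d alpha^{p,q})^{p+1,q} and (d alpha^{p,q})^{p,q+1}.\<close>
definition del :: "(real^'m \<Rightarrow> real^'m \<Rightarrow> real^'m) \<Rightarrow> (real^'m \<Rightarrow> real^'m) \<Rightarrow> nat \<Rightarrow> 'm form \<Rightarrow> 'm form" where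
  "del B J k \<alpha> xs = (\<Sum>p\<le>k. tcomp J (p+1) (dCE B k (tcomp J p \<alpha>)) xs)"
definition delbar :: "(real^'m \<Rightarrow> real^'m \<Rightarrow> real^'m) \<Rightarrow> (real^'m \<Rightarrow> real^'m) \<Rightarrow> nat \<Rightarrow> 'm form \<Rightarrow> 'm form" where
  "delbar B J k \<alpha> xs = (\<Sum>p\<le>k. tcomp J p (dCE B k (tcomp J p \<alpha>)) xs)"

end

theory Submission
  imports Defs
begin

text \<open>On a unimodular Lie algebra of dimension N the Chevalley--Eilenberg differential of every
  (N-1)-form \<beta> vanishes. By multilinearity it suffices to evaluate d\<beta> on a basis e_1, ..., e_N. In
  the summand \<beta>([e_i, e_j], ...) alternation kills every component of the bracket except those
  along e_i and e_j; moving these into place and collecting terms gives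
  d\<beta>(e_1, ..., e_N) = \<Sum>_j \<plusminus>\<beta>(e_1, ..., e_j omitted, ..., e_N) tr ad(e_j) = 0.
  Hence every type component of d applied to the (2n-1)-form delbar(\<omega>^(n-1)) vanishes, in
  particular del (delbar (\<omega>^(n-1))).\<close>

section \<open>Multilinear alternating forms\<close>

definition clinear_functional :: "(complex^'m \<Rightarrow> complex) \<Rightarrow> bool" where
  "clinear_functional f \<longleftrightarrow> (\<forall>u v. f (u + v) = f u + f v) \<and> (\<forall>c u. f (c *s u) = c * f u)"

definition clinear_map :: "(complex^'m \<Rightarrow> complex^'n) \<Rightarrow> bool" where
  "clinear_map f \<longleftrightarrow> (\<forall>u v. f (u + v) = f u + f v) \<and> (\<forall>c u. f (c *s u) = c *s f u)"

definition multilinear :: "nat \<Rightarrow> ('m::finite) form \<Rightarrow> bool" where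
  "multilinear k \<alpha> \<longleftrightarrow>
     (\<forall>ys i. length ys = k \<longrightarrow> i < k \<longrightarrow> clinear_functional (\<lambda>w. \<alpha> (ys[i := w])))"

definition alternating :: "nat \<Rightarrow> ('m::finite) form \<Rightarrow> bool" where
  "alternating k \<alpha> \<longleftrightarrow> (\<forall>ys. length ys = k \<longrightarrow> \<not> distinct ys \<longrightarrow> \<alpha> ys = 0)"

lemma clinear_functional_add: "clinear_functional f \<Longrightarrow> f (u + v) = f u + f v"
  by (simp add: clinear_functional_def)

lemma clinear_functional_scale: "clinear_functional f \<Longrightarrow> f (c *s u) = c * f u"
  by (simp add: clinear_functional_def)

lemma clinear_functional_zero: "clinear_functional f \<Longrightarrow> f 0 = 0"
  using clinear_functional_scale[of f 0 0] by simp

lemma clinear_functional_sum: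
  "clinear_functional f \<Longrightarrow> f (\<Sum>c\<in>A. v c) = (\<Sum>c\<in>A. f (v c))"
  by (induction A rule: infinite_finite_induct)
     (simp_all add: clinear_functional_zero clinear_functional_add)

lemma clinear_functional_compose:
  "clinear_functional f \<Longrightarrow> clinear_map L \<Longrightarrow> clinear_functional (\<lambda>w. f (L w))"
  by (simp add: clinear_functional_def clinear_map_def)

lemma clinear_functional_mult_left:
  "clinear_functional f \<Longrightarrow> clinear_functional (\<lambda>w. c * f w)"
  by (simp add: clinear_functional_def algebra_simps)

lemma clinear_functional_mult_right:
  "clinear_functional f \<Longrightarrow> clinear_functional (\<lambda>w. f w * c)"
  by (simp add: clinear_functional_def algebra_simps)

lemma clinear_functional_sum_fun:
  "finite A \<Longrightarrow> (\<And>a. a \<in> A \<Longrightarrow> clinear_functional (f a)) \<Longrightarrow>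
     clinear_functional (\<lambda>w. \<Sum>a\<in>A. f a w)"
  by (induction A rule: finite_induct) (simp_all add: clinear_functional_def algebra_simps)

lemma multilinearD:
  "multilinear k \<alpha> \<Longrightarrow> length ys = k \<Longrightarrow> i < k \<Longrightarrow> clinear_functional (\<lambda>w. \<alpha> (ys[i := w]))"
  by (simp add: multilinear_def)

lemma multilinear_linear_head:
  assumes "multilinear (Suc (length zs)) \<alpha>"
  shows "clinear_functional (\<lambda>v. \<alpha> (v # zs))"
  using multilinearD[OF assms, of "0 # zs" 0] by simp

lemma alternatingD: "alternating k \<alpha> \<Longrightarrow> length ys = k \<Longrightarrow> \<not> distinct ys \<Longrightarrow> \<alpha> ys = 0"
  by (simp add: alternating_def)

lemma multilinear_sum:
  "finite A \<Longrightarrow> (\<And>p. p \<in> A \<Longrightarrow> multilinear k (F p)) \<Longrightarrow> multilinear k (\<lambda>xs. \<Sum>p\<in>A. F p xs)"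
  unfolding multilinear_def by (auto intro!: clinear_functional_sum_fun)

lemma alternating_sum:
  "(\<And>p. p \<in> A \<Longrightarrow> alternating k (F p)) \<Longrightarrow> alternating k (\<lambda>xs. \<Sum>p\<in>A. F p xs)"
  unfolding alternating_def by (auto intro!: sum.neutral)

text \<open>Polarization: F (ys with u+v at positions i and j) = 0 expands to the swap identity.\<close>
lemma multilinear_swap_neg:
  assumes ml: "multilinear k F" and len: "length ys = k" and ij: "i < k" "j < k" "i \<noteq> j"
    and rep: "\<And>zs. length zs = k \<Longrightarrow> zs ! i = zs ! j \<Longrightarrow> F zs = 0"
  shows "F (ys[i := ys ! j, j := ys ! i]) = - F ys"
proof -
  define Z where "Z = (\<lambda>w1 w2. ys[i := w1, j := w2])"
  have lin1: "F (Z (w1 + w1') w2) = F (Z w1 w2) + F (Z w1' w2)" for w1 w1' w2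
  proof -
    have "Z w w2 = (ys[j := w2])[i := w]" for w
      using ij by (simp add: Z_def list_update_swap)
    then show ?thesis
      using clinear_functional_add[OF multilinearD[OF ml _ ij(1), of "ys[j := w2]"]] len by simp
  qed
  have lin2: "F (Z w1 (w2 + w2')) = F (Z w1 w2) + F (Z w1 w2')" for w1 w2 w2'
    using clinear_functional_add[OF multilinearD[OF ml _ ij(2), of "ys[i := w1]"]] len
    by (simp add: Z_def)
  have diag: "F (Z w w) = 0" for w
    using rep[of "Z w w"] len ij by (simp add: Z_def nth_list_update)
  have "0 = F (Z (ys ! i + ys ! j) (ys ! i + ys ! j))" by (simp add: diag)
  also have "\<dots> = F (Z (ys ! i) (ys ! j)) + F (Z (ys ! j) (ys ! i))"
    unfolding lin1 lin2 by (simp add: diag)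
  finally have "F (Z (ys ! j) (ys ! i)) = - F (Z (ys ! i) (ys ! j))"
    by (simp add: eq_neg_iff_add_eq_0 add.commute)
  then show ?thesis by (simp add: Z_def)
qed

lemma alternating_swap:
  assumes "multilinear k F" "alternating k F" "length ys = k" "i < k" "j < k" "i \<noteq> j"
  shows "F (ys[i := ys ! j, j := ys ! i]) = - F ys"
  using assms by (intro multilinear_swap_neg) (auto simp: alternating_def distinct_conv_nth)

lemma alternatingI_adjacent:
  assumes ml: "multilinear k F"
    and adj: "\<And>ys a. length ys = k \<Longrightarrow> Suc a < k \<Longrightarrow> ys ! a = ys ! Suc a \<Longrightarrow> F ys = 0"
  shows "alternating k F"
proof -
  have gap: "F ys = 0" if "length ys = k" "i + Suc d < k" "ys ! i = ys ! (i + Suc d)" for d i ys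
    using that
  proof (induction d arbitrary: ys)
    case 0
    then show ?case using adj by simp
  next
    case (Suc d)
    define a where "a = i + Suc d"
    have a: "Suc a < k" using Suc.prems by (simp add: a_def)
    define ys' where "ys' = ys[a := ys ! Suc a, Suc a := ys ! a]"
    have "F ys' = 0"
      using Suc.IH[of ys'] Suc.prems a by (simp add: ys'_def a_def nth_list_update)
    moreover have "F ys' = - F ys"
      unfolding ys'_def by (rule multilinear_swap_neg[OF ml Suc.prems(1)]) (use a in \<open>auto intro: adj\<close>)
    ultimately show ?case by simp
  qed
  show ?thesis unfolding alternating_def
  proof (intro allI impI)
    fix ys :: "(complex^'a) list"
    assume len: "length ys = k" and "\<not> distinct ys"
    then obtain i j where ij: "i < j" "j < k" "ys ! i = ys ! j"
      by (metis distinct_conv_nth linorder_neqE_nat)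
    then obtain d where "j = i + Suc d" using less_imp_Suc_add by fastforce
    then show "F ys = 0" using gap len ij by simp
  qed
qed

lemma alternating_move_to_front:
  assumes a: "multilinear k \<beta>" and al: "alternating k \<beta>" and lz: "Suc (length zs) = k"
    and p: "p \<le> length zs"
  shows "\<beta> (y # zs) = (-1)^p * \<beta> (take p zs @ y # drop p zs)"
  using p
proof (induction p)
  case 0
  then show ?case by simp
next
  case (Suc p)
  define ys where "ys = take p zs @ y # drop p zs"
  have pl: "p < length zs" using Suc.prems by simp
  have ys': "ys = take p zs @ y # zs ! p # drop (Suc p) zs"
    using pl by (simp add: ys_def Cons_nth_drop_Suc)
  have "ys[p := ys ! Suc p, Suc p := ys ! p] = take (Suc p) zs @ y # drop (Suc p) zs"
    using pl by (simp add: ys' nth_append list_update_append take_Suc_conv_app_nth)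
  then have "\<beta> (take (Suc p) zs @ y # drop (Suc p) zs) = - \<beta> ys"
    using alternating_swap[OF a al, of ys p "Suc p"] lz pl by (simp add: ys_def)
  moreover have "\<beta> (y # zs) = (-1)^p * \<beta> ys" using Suc by (simp add: ys_def)
  ultimately show ?case by simp
qed

lemma alternating_cons_sum:
  assumes a: "multilinear (Suc (length zs)) \<beta>" and al: "alternating (Suc (length zs)) \<beta>"
    and fin: "finite A" and C: "C \<subseteq> A" and rep: "\<And>l. l \<in> A - C \<Longrightarrow> e l \<in> set zs"
  shows "\<beta> ((\<Sum>l\<in>A. c l *s e l) # zs) = (\<Sum>l\<in>C. c l * \<beta> (e l # zs))"
proof -
  note lin = multilinear_linear_head[OF a]
  have "\<beta> ((\<Sum>l\<in>A. c l *s e l) # zs) = (\<Sum>l\<in>A. c l * \<beta> (e l # zs))"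
    by (simp add: clinear_functional_sum[OF lin] clinear_functional_scale[OF lin])
  also have "\<dots> = (\<Sum>l\<in>C. c l * \<beta> (e l # zs))"
    using rep alternatingD[OF al] by (intro sum.mono_neutral_right fin C) auto
  finally show ?thesis .
qed

lemma multilinear_eq_0_if_eq_0_on_axes:
  assumes ml: "multilinear n F"
    and axes: "\<And>f. F (map (\<lambda>l. axis (f l) 1) [0..<n]) = 0"
    and len: "length xs = n"
  shows "F xs = 0"
proof -
  have partial: "F xs = 0" if "length xs = n" "\<forall>l. m \<le> l \<and> l < n \<longrightarrow> xs ! l \<in> range (\<lambda>c. axis c 1)"
    for m xs
    using that
  proof (induction m arbitrary: xs)
    case 0
    define f where "f = (\<lambda>l. SOME c. xs ! l = axis c 1)"
    have "xs ! l = axis (f l) 1" if "l < n" for l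
      unfolding f_def by (rule someI_ex) (use 0 that in auto)
    then have "xs = map (\<lambda>l. axis (f l) 1) [0..<n]" using 0 by (intro nth_equalityI) auto
    then show ?case using axes by simp
  next
    case (Suc m)
    show ?case
    proof (cases "m < n")
      case False
      then show ?thesis using Suc by auto
    next
      case True
      note lin = multilinearD[OF ml Suc.prems(1) True]
      have "F xs = F (xs[m := (\<Sum>c\<in>UNIV. (xs ! m $ c) *s axis c 1)])"
        by (simp add: basis_expansion)
      also have "\<dots> = (\<Sum>c\<in>UNIV. (xs ! m $ c) * F (xs[m := axis c 1]))"
        by (simp add: clinear_functional_sum[OF lin] clinear_functional_scale[OF lin])
      also have "\<dots> = 0"
        using Suc True by (intro sum.neutral) (auto simp: nth_list_update)
      finally show ?thesis .
    qed
  qed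
  show ?thesis by (rule partial[of xs n]) (use len in auto)
qed

section \<open>Complexification\<close>

lemma cre_cpx [simp]: "cre (cpx a b) = a" by (simp add: cre_def cpx_def vec_eq_iff)
lemma cim_cpx [simp]: "cim (cpx a b) = b" by (simp add: cim_def cpx_def vec_eq_iff)
lemma cvec_eq_iff: "x = y \<longleftrightarrow> cre x = cre y \<and> cim x = cim y"
  by (auto simp: cre_def cim_def vec_eq_iff complex_eq_iff)
lemma cre_add [simp]: "cre (x + y) = cre x + cre y" by (simp add: cre_def vec_eq_iff)
lemma cim_add [simp]: "cim (x + y) = cim x + cim y" by (simp add: cim_def vec_eq_iff)
lemma cre_minus [simp]: "cre (- x) = - cre x" by (simp add: cre_def vec_eq_iff)
lemma cim_minus [simp]: "cim (- x) = - cim x" by (simp add: cim_def vec_eq_iff)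
lemma cre_scale [simp]: "cre (c *s x) = Re c *\<^sub>R cre x - Im c *\<^sub>R cim x"
  by (simp add: cre_def cim_def vec_eq_iff)
lemma cim_scale [simp]: "cim (c *s x) = Re c *\<^sub>R cim x + Im c *\<^sub>R cre x"
  by (simp add: cre_def cim_def vec_eq_iff)
lemma cre_axis: "cre (axis c (1::complex)) = axis c 1" by (simp add: cre_def vec_eq_iff axis_def)
lemma cim_axis: "cim (axis c (1::complex)) = 0" by (simp add: cim_def vec_eq_iff axis_def)

lemma clinear_map_JC: "linear J \<Longrightarrow> clinear_map (JC J)"
  unfolding clinear_map_def JC_def by (simp add: cvec_eq_iff linear_add linear_diff linear_scale)

lemma clinear_map_P10: "linear J \<Longrightarrow> clinear_map (P10 J)"
  using clinear_map_JC[of J] unfolding clinear_map_def P10_def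
  by (simp add: vector_ssub_ldistrib vector_sadd_rdistrib vector_add_ldistrib vector_smult_assoc
      algebra_simps)

lemma clinear_map_P01: "linear J \<Longrightarrow> clinear_map (P01 J)"
  using clinear_map_JC[of J] unfolding clinear_map_def P01_def
  by (simp add: vector_ssub_ldistrib vector_sadd_rdistrib vector_add_ldistrib vector_smult_assoc
      algebra_simps)

lemma clinear_map_brC_left: "bilinear B \<Longrightarrow> clinear_map (\<lambda>x. brC B x y)"
  unfolding clinear_map_def brC_def
  by (simp add: cvec_eq_iff bilinear_ladd bilinear_lsub bilinear_lmul algebra_simps)

lemma clinear_map_brC_right: "bilinear B \<Longrightarrow> clinear_map (brC B x)"
  unfolding clinear_map_def brC_def
  by (simp add: cvec_eq_iff bilinear_radd bilinear_rsub bilinear_rmul algebra_simps)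

lemma brC_antisym:
  assumes "\<forall>x y. B x y = - B y x"
  shows "brC B x y = - brC B y x"
proof -
  have "B (cre y) (cre x) = - B (cre x) (cre y)" "B (cim y) (cim x) = - B (cim x) (cim y)"
    "B (cre y) (cim x) = - B (cim x) (cre y)" "B (cim y) (cre x) = - B (cre x) (cim y)"
    using assms by blast+
  then show ?thesis unfolding brC_def cvec_eq_iff by (simp only: cre_cpx cim_cpx cre_minus cim_minus) simp
qed

lemma brC_self:
  assumes "\<forall>x y. B x y = - B y x"
  shows "brC B x x = 0"
  using brC_antisym[OF assms, of x x] by (simp add: vec_eq_iff complex_eq_iff)

lemma brC_axis:
  "bilinear B \<Longrightarrow> brC B (axis c 1) (axis d 1) $ i = complex_of_real (B (axis c 1) (axis d 1) $ i)"
  by (simp add: brC_def cre_axis cim_axis bilinear_lzero bilinear_rzero cpx_def complex_of_real_def)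

lemma clinear_functional_gC_left: "bilinear g \<Longrightarrow> clinear_functional (\<lambda>x. gC g x y)"
  unfolding clinear_functional_def gC_def
  by (simp add: complex_eq_iff bilinear_ladd bilinear_lsub bilinear_lmul algebra_simps)

lemma clinear_functional_gC_right: "bilinear g \<Longrightarrow> clinear_functional (gC g x)"
  unfolding clinear_functional_def gC_def
  by (simp add: complex_eq_iff bilinear_radd bilinear_rsub bilinear_rmul algebra_simps)

section \<open>Powers of the Kaehler form and type components\<close>

lemma multilinear_kform:
  assumes J: "linear J" and g: "bilinear g"
  shows "multilinear 2 (kform J g)"
  unfolding multilinear_def
proof (intro allI impI)
  fix ys :: "(complex^'a) list" and i :: nat
  assume len: "length ys = 2" and "i < 2"
  then consider "i = 0" | "i = 1" by linarith
  then show "clinear_functional (\<lambda>w. kform J g (ys[i := w]))"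
  proof cases
    case 1
    have "clinear_functional (\<lambda>w. gC g (JC J w) (ys ! 1))"
      by (rule clinear_functional_compose[OF clinear_functional_gC_left[OF g] clinear_map_JC[OF J]])
    then show ?thesis using 1 len by (simp add: kform_def)
  next
    case 2
    then show ?thesis using len clinear_functional_gC_right[OF g] by (simp add: kform_def)
  qed
qed

lemma map_nth_list_update_permutes:
  assumes s: "\<sigma> permutes {..<N}" and len: "length xs = N" and l: "l < N" and b: "b \<le> N"
  shows "map (\<lambda>i. xs[l := w] ! \<sigma> i) [a..<b] =
    (if a \<le> inv \<sigma> l \<and> inv \<sigma> l < b then (map (\<lambda>i. xs ! \<sigma> i) [a..<b])[inv \<sigma> l - a := w]
     else map (\<lambda>i. xs ! \<sigma> i) [a..<b])"
proof -
  have iff: "l = \<sigma> x \<longleftrightarrow> x = inv \<sigma> l" for x using permutes_inverses[OF s] by metis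
  have lt: "\<sigma> x < N" if "x < N" for x using permutes_in_image[OF s] that by auto
  show ?thesis
    by (rule nth_equalityI) (use len b lt l in \<open>auto simp: nth_list_update iff\<close>)
qed

lemma alternating_wedge: "alternating (p + q) (wedge p q \<alpha> \<beta>)"
  unfolding alternating_def
proof (intro allI impI)
  fix xs :: "(complex^'a) list"
  assume "length xs = p + q" and "\<not> distinct xs"
  then obtain i j where ij: "i < p + q" "j < p + q" "i \<noteq> j" "xs ! i = xs ! j"
    by (auto simp: distinct_conv_nth)
  define P where "P = {\<sigma>. \<sigma> permutes {..<p+q}}"
  define \<tau> where "\<tau> = Transposition.transpose i j"
  define f where "f = (\<lambda>\<sigma>. of_int (sign \<sigma>) *
      \<alpha> (map (\<lambda>i. xs ! \<sigma> i) [0..<p]) * \<beta> (map (\<lambda>i. xs ! \<sigma> i) [p..<p+q]) :: complex)"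
  have \<tau>P: "\<tau> permutes {..<p+q}" unfolding \<tau>_def using ij by (intro permutes_swap_id) auto
  have xs\<tau>: "xs ! \<tau> m = xs ! m" for m
    using ij by (cases "m = i"; cases "m = j") (auto simp: \<tau>_def)
  have "sum f P = sum (\<lambda>\<sigma>. f (\<tau> \<circ> \<sigma>)) P"
    by (rule sum.reindex_bij_witness[where i="\<lambda>\<sigma>. \<tau> \<circ> \<sigma>" and j="\<lambda>\<sigma>. \<tau> \<circ> \<sigma>"])
       (auto simp: P_def comp_assoc[symmetric] \<tau>_def intro: permutes_compose[OF _ \<tau>P, unfolded \<tau>_def])
  also have "\<dots> = sum (\<lambda>\<sigma>. - f \<sigma>) P"
  proof (rule sum.cong[OF refl])
    fix \<sigma> assume "\<sigma> \<in> P"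
    then have "sign (\<tau> \<circ> \<sigma>) = sign \<tau> * sign \<sigma>"
      by (intro sign_compose) (use \<tau>P in \<open>auto simp: P_def intro: permutes_imp_permutation\<close>)
    moreover have "sign \<tau> = -1" using ij by (simp add: \<tau>_def sign_swap_id)
    ultimately show "f (\<tau> \<circ> \<sigma>) = - f \<sigma>" by (simp add: f_def xs\<tau>)
  qed
  finally have "sum f P = 0" by (simp add: sum_negf)
  then show "wedge p q \<alpha> \<beta> xs = 0" unfolding wedge_def f_def P_def by simp
qed

lemma multilinear_wedge:
  assumes a: "multilinear p \<alpha>" and b: "multilinear q \<beta>"
  shows "multilinear (p + q) (wedge p q \<alpha> \<beta>)"
  unfolding multilinear_def
proof (intro allI impI)
  fix xs :: "(complex^'a) list" and l
  assume len: "length xs = p + q" and l: "l < p + q"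
  define P where "P = {\<sigma>. \<sigma> permutes {..<p+q}}"
  have summand: "clinear_functional (\<lambda>w. of_int (sign \<sigma>) * \<alpha> (map (\<lambda>i. xs[l:=w] ! \<sigma> i) [0..<p]) *
                \<beta> (map (\<lambda>i. xs[l:=w] ! \<sigma> i) [p..<p+q]))" if "\<sigma> \<in> P" for \<sigma>
  proof -
    have s: "\<sigma> permutes {..<p+q}" using that by (simp add: P_def)
    have m: "inv \<sigma> l < p + q" using permutes_in_image[OF permutes_inv[OF s]] l by auto
    note upd = map_nth_list_update_permutes[OF s len l]
    show ?thesis
    proof (cases "inv \<sigma> l < p")
      case True
      have e1: "map (\<lambda>i. xs[l := w] ! \<sigma> i) [0..<p] = (map (\<lambda>i. xs ! \<sigma> i) [0..<p])[inv \<sigma> l := w]"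
        and e2: "map (\<lambda>i. xs[l := w] ! \<sigma> i) [p..<p+q] = map (\<lambda>i. xs ! \<sigma> i) [p..<p+q]" for w
        using True upd[where a=0 and b=p] upd[where a=p and b="p+q"] by simp_all
      have "clinear_functional (\<lambda>w. \<alpha> ((map (\<lambda>i. xs ! \<sigma> i) [0..<p])[inv \<sigma> l := w]))"
        using True by (intro multilinearD[OF a]) auto
      then show ?thesis unfolding e1 e2 by (intro clinear_functional_mult_left clinear_functional_mult_right)
    next
      case False
      have e1: "map (\<lambda>i. xs[l := w] ! \<sigma> i) [0..<p] = map (\<lambda>i. xs ! \<sigma> i) [0..<p]"
        and e2: "map (\<lambda>i. xs[l := w] ! \<sigma> i) [p..<p+q] = (map (\<lambda>i. xs ! \<sigma> i) [p..<p+q])[inv \<sigma> l - p := w]"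
        for w using False m upd[where a=0 and b=p] upd[where a=p and b="p+q"] by simp_all
      have "clinear_functional (\<lambda>w. \<beta> ((map (\<lambda>i. xs ! \<sigma> i) [p..<p+q])[inv \<sigma> l - p := w]))"
        using False m by (intro multilinearD[OF b]) auto
      then show ?thesis unfolding e1 e2 by (intro clinear_functional_mult_left)
    qed
  qed
  have "finite P" unfolding P_def by (rule finite_permutations) simp
  then show "clinear_functional (\<lambda>w. wedge p q \<alpha> \<beta> (xs[l := w]))"
    unfolding wedge_def P_def[symmetric]
    by (intro clinear_functional_mult_left clinear_functional_sum_fun summand)
qed

lemma multilinear_kpow:
  assumes "linear J" "bilinear g"
  shows "multilinear (2 * j) (kpow J g j)"
proof (induction j)
  case 0
  then show ?case by (simp add: multilinear_def clinear_functional_def)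
next
  case (Suc j)
  then show ?case using multilinear_wedge[OF multilinear_kform[OF assms] Suc.IH] by simp
qed

lemma alternating_kpow: "alternating (2 * j) (kpow J g j)"
proof (cases j)
  case 0
  then show ?thesis by (simp add: alternating_def)
next
  case (Suc i)
  then show ?thesis using alternating_wedge[of 2 "2 * i" "kform J g" "kpow J g i"] by simp
qed

lemma multilinear_tcomp:
  assumes J: "linear J" and a: "multilinear k \<alpha>"
  shows "multilinear k (tcomp J p \<alpha>)"
  unfolding multilinear_def
proof (intro allI impI)
  fix xs :: "(complex^'a) list" and i
  assume len: "length xs = k" and i: "i < k"
  define SS where "SS = {S. S \<subseteq> {..<k} \<and> card S = p}"
  define L where "L = (\<lambda>S. map (\<lambda>l. if l \<in> S then P10 J (xs ! l) else P01 J (xs ! l)) [0..<k])"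
  have upd: "map (\<lambda>l. if l \<in> S then P10 J (xs[i:=w] ! l) else P01 J (xs[i:=w] ! l)) [0..<k]
      = (L S)[i := (if i \<in> S then P10 J w else P01 J w)]" for S w
    by (rule nth_equalityI) (use len i in \<open>auto simp: L_def nth_list_update\<close>)
  have "clinear_functional (\<lambda>w. \<alpha> ((L S)[i := (if i \<in> S then P10 J w else P01 J w)]))" for S
  proof -
    have lin: "clinear_functional (\<lambda>w. \<alpha> ((L S)[i := w]))"
      using multilinearD[OF a, of "L S" i] i by (simp add: L_def)
    show ?thesis
      using clinear_functional_compose[OF lin clinear_map_P10[OF J]]
        clinear_functional_compose[OF lin clinear_map_P01[OF J]] by (cases "i \<in> S") simp_all
  qed
  moreover have "finite SS" unfolding SS_def by (rule finite_subset[of _ "Pow {..<k}"]) auto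
  ultimately have "clinear_functional (\<lambda>w. \<Sum>S\<in>SS. \<alpha> ((L S)[i := (if i \<in> S then P10 J w else P01 J w)]))"
    by (intro clinear_functional_sum_fun)
  then show "clinear_functional (\<lambda>w. tcomp J p \<alpha> (xs[i := w]))"
    unfolding tcomp_def using len by (simp add: upd SS_def)
qed

text \<open>Transposing two equal arguments permutes the index sets S, and negates each summand.\<close>
lemma alternating_tcomp:
  assumes J: "linear J" and a: "multilinear k \<alpha>" and al: "alternating k \<alpha>"
  shows "alternating k (tcomp J p \<alpha>)"
  unfolding alternating_def
proof (intro allI impI)
  fix xs :: "(complex^'a) list"
  assume len: "length xs = k" and "\<not> distinct xs"
  then obtain i j where ij: "i < k" "j < k" "i \<noteq> j" "xs ! i = xs ! j"
    by (auto simp: distinct_conv_nth)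
  define \<tau> where "\<tau> = Transposition.transpose i j"
  define SS where "SS = {S. S \<subseteq> {..<k} \<and> card S = p}"
  define g where "g = (\<lambda>S l. if l \<in> S then P10 J (xs ! l) else P01 J (xs ! l))"
  define f where "f = (\<lambda>S. \<alpha> (map (g S) [0..<k]))"
  have \<tau>k: "\<tau> x < k \<longleftrightarrow> x < k" for x
    using ij by (cases "x = i"; cases "x = j") (auto simp: \<tau>_def)
  have xs\<tau>: "xs ! \<tau> l = xs ! l" for l
    using ij by (cases "l = i"; cases "l = j") (auto simp: \<tau>_def)
  have \<tau>\<tau>: "\<tau> (\<tau> x) = x" for x by (simp add: \<tau>_def)
  have mem: "\<tau> ` S \<in> SS" if "S \<in> SS" for S
    using that \<tau>k by (auto simp: SS_def \<tau>_def card_image)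
  have "sum f SS = sum (\<lambda>S. f (\<tau> ` S)) SS"
    by (rule sum.reindex_bij_witness[where i="\<lambda>S. \<tau> ` S" and j="\<lambda>S. \<tau> ` S"])
       (auto simp: mem image_image \<tau>\<tau>)
  also have "\<dots> = sum (\<lambda>S. - f S) SS"
  proof (rule sum.cong[OF refl])
    fix S
    have "map (g (\<tau> ` S)) [0..<k] = (map (g S) [0..<k])[i := g S j, j := g S i]"
      using ij xs\<tau> by (intro nth_equalityI)
        (auto simp: g_def in_transpose_image_iff \<tau>_def nth_list_update)
    then show "f (\<tau> ` S) = - f S"
      unfolding f_def using alternating_swap[OF a al, of "map (g S) [0..<k]" i j] ij by simp
  qed
  finally have "sum f SS = 0" by (simp add: sum_negf)
  then show "tcomp J p \<alpha> xs = 0" unfolding tcomp_def f_def g_def SS_def using len by simp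
qed

section \<open>The Chevalley--Eilenberg differential\<close>

definition dCE_term ::
  "(real^'m \<Rightarrow> real^'m \<Rightarrow> real^'m) \<Rightarrow> ('m::finite) form \<Rightarrow> (complex^'m) list \<Rightarrow> nat \<Rightarrow> nat \<Rightarrow> complex"
where
  "dCE_term B \<alpha> xs i j = (-1) ^ (i + j) *
     \<alpha> (brC B (xs ! i) (xs ! j) # map (nth xs) (filter (\<lambda>l. l \<noteq> i \<and> l \<noteq> j) [0..<length xs]))"

lemma dCE_eq_sum_dCE_term:
  "length xs = Suc k \<Longrightarrow> dCE B k \<alpha> xs = (\<Sum>i<Suc k. \<Sum>j\<in>{i<..<Suc k}. dCE_term B \<alpha> xs i j)"
  unfolding dCE_def dCE_term_def by simp

lemma upt_conv_append_Cons: "a \<le> m \<Longrightarrow> m < K \<Longrightarrow> [a..<K] = [a..<m] @ m # [Suc m..<K]"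
  using upt_add_eq_append[of a m "K - m"] upt_conv_Cons[of m K] by simp

lemma length_filter_upt_neq2:
  assumes "i < j" "j < K"
  shows "length (filter (\<lambda>l. l \<noteq> i \<and> l \<noteq> j) [0..<K]) = K - 2"
proof -
  have "{t. t < length [0..<K] \<and> [0..<K] ! t \<noteq> i \<and> [0..<K] ! t \<noteq> j} = {..<K} - {i, j}"
    by auto
  moreover have "card ({..<K} - {i, j}) = K - 2"
    using assms by (subst card_Diff_subset) auto
  ultimately show ?thesis by (simp add: length_filter_conv_card)
qed

lemma map_nth_list_update_filter:
  assumes len: "length xs = K" and m: "m < K" and P: "P m"
  shows "map (nth (xs[m := w])) (filter P [0..<K]) =
          (map (nth xs) (filter P [0..<K]))[length (filter P [0..<m]) := w]"
    and "length (filter P [0..<m]) < length (filter P [0..<K])"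
proof -
  have before: "map (nth (xs[m := w])) (filter P [0..<m]) = map (nth xs) (filter P [0..<m])"
    and after: "map (nth (xs[m := w])) (filter P [Suc m..<K]) = map (nth xs) (filter P [Suc m..<K])"
    by (auto intro: map_cong)
  show "map (nth (xs[m := w])) (filter P [0..<K]) =
          (map (nth xs) (filter P [0..<K]))[length (filter P [0..<m]) := w]"
    unfolding upt_conv_append_Cons[OF le0 m] using len m P by (simp add: before after list_update_append)
  show "length (filter P [0..<m]) < length (filter P [0..<K])"
    unfolding upt_conv_append_Cons[OF le0 m] using P by simp
qed

lemma clinear_functional_dCE_term:
  assumes B: "bilinear B" and a: "multilinear k \<alpha>" and len: "length xs = Suc k"
    and ij: "i < j" "j < Suc k" and m: "m < Suc k"
  shows "clinear_functional (\<lambda>w. dCE_term B \<alpha> (xs[m := w]) i j)"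
proof -
  define P where "P = (\<lambda>l. l \<noteq> i \<and> l \<noteq> j)"
  define R where "R = map (nth xs) (filter P [0..<Suc k])"
  have a': "multilinear (Suc (length R)) \<alpha>"
    using a length_filter_upt_neq2[OF ij] ij by (simp add: R_def P_def)
  have "clinear_functional (\<lambda>w. \<alpha> (brC B (xs[m := w] ! i) (xs[m := w] ! j) #
      map (nth (xs[m := w])) (filter P [0..<Suc k])))"
  proof (cases "m = i \<or> m = j")
    case True
    have rest: "map (nth (xs[m := w])) (filter P [0..<Suc k]) = R" for w
      unfolding R_def using True by (intro map_cong) (auto simp: P_def simp del: upt_Suc)
    note head = multilinear_linear_head[OF a']
    have "clinear_functional (\<lambda>w. \<alpha> (brC B w (xs ! j) # R))"
      and "clinear_functional (\<lambda>w. \<alpha> (brC B (xs ! i) w # R))"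
      by (rule clinear_functional_compose[OF head clinear_map_brC_left[OF B]],
          rule clinear_functional_compose[OF head clinear_map_brC_right[OF B]])
    then show ?thesis using True ij len by (auto simp: rest simp del: upt_Suc)
  next
    case False
    then have "P m" by (simp add: P_def)
    note upd = map_nth_list_update_filter[OF len m, of P, OF this]
    have "clinear_functional (\<lambda>w. \<alpha> ((brC B (xs ! i) (xs ! j) # R)[Suc (length (filter P [0..<m])) := w]))"
      using upd(2) a' by (intro multilinearD) (auto simp: R_def simp del: upt_Suc)
    then show ?thesis using False upd(1) by (simp add: R_def)
  qed
  then show ?thesis
    unfolding dCE_term_def P_def using len by (simp add: clinear_functional_mult_left)
qed

lemma multilinear_dCE:
  assumes B: "bilinear B" and a: "multilinear k \<alpha>"
  shows "multilinear (Suc k) (dCE B k \<alpha>)"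
  unfolding multilinear_def
proof (intro allI impI)
  fix xs :: "(complex^'a) list" and m
  assume len: "length xs = Suc k" and m: "m < Suc k"
  have "clinear_functional (\<lambda>w. \<Sum>i<Suc k. \<Sum>j\<in>{i<..<Suc k}. dCE_term B \<alpha> (xs[m := w]) i j)"
    using clinear_functional_dCE_term[OF B a len _ _ m]
    by (intro clinear_functional_sum_fun) auto
  then show "clinear_functional (\<lambda>w. dCE B k \<alpha> (xs[m := w]))"
    using len by (simp add: dCE_eq_sum_dCE_term)
qed

lemma map_nth_filter_transpose_adjacent:
  assumes "Suc a < K" and "ys ! a = ys ! Suc a"
  shows "map (nth ys) (filter (\<lambda>l. Q (Transposition.transpose a (Suc a) l)) [0..<K]) =
         map (nth ys) (filter Q [0..<K])"
proof -
  have split: "[0..<K] = [0..<a] @ a # Suc a # [Suc (Suc a)..<K]"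
    using upt_conv_append_Cons[of 0 a K] upt_conv_Cons[of "Suc a" K] assms(1) by simp
  have "filter (\<lambda>l. Q (Transposition.transpose a (Suc a) l)) [0..<a] = filter Q [0..<a]"
    and "filter (\<lambda>l. Q (Transposition.transpose a (Suc a) l)) [Suc (Suc a)..<K] =
         filter Q [Suc (Suc a)..<K]"
    by (auto intro: filter_cong)
  then show ?thesis unfolding split using assms(2) by (cases "Q a"; cases "Q (Suc a)") simp_all
qed

lemma dCE_term_adjacent_self:
  assumes anti: "\<forall>x y. B x y = - B y x" and a: "multilinear k \<alpha>"
    and len: "length xs = Suc k" and sa: "Suc a < Suc k" and eq: "xs ! a = xs ! Suc a"
  shows "dCE_term B \<alpha> xs a (Suc a) = 0"
proof -
  define R where "R = map (nth xs) (filter (\<lambda>l. l \<noteq> a \<and> l \<noteq> Suc a) [0..<length xs])"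
  have "multilinear (Suc (length R)) \<alpha>"
    using a length_filter_upt_neq2[of a "Suc a" "Suc k"] sa len by (simp add: R_def)
  then have "\<alpha> (0 # R) = 0" by (rule clinear_functional_zero[OF multilinear_linear_head])
  then show ?thesis using brC_self[OF anti] eq by (simp add: dCE_term_def R_def)
qed

text \<open>For two equal adjacent arguments, the transposition of the two positions is a sign-reversing
  involution on the remaining summands of the differential; summands not touching the two positions
  vanish by themselves.\<close>
lemma dCE_term_transpose_adjacent:
  assumes al: "alternating k \<alpha>" and len: "length xs = Suc k" and sa: "Suc a < Suc k"
    and eq: "xs ! a = xs ! Suc a" and ij: "i < j" "j < Suc k" and ne: "(i, j) \<noteq> (a, Suc a)"
  defines "\<tau> \<equiv> Transposition.transpose a (Suc a)"
  shows "dCE_term B \<alpha> xs (\<tau> i) (\<tau> j) = - dCE_term B \<alpha> xs i j"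
proof (cases "i \<in> {a, Suc a} \<or> j \<in> {a, Suc a}")
  case False
  then have fix_ij: "\<tau> i = i" "\<tau> j = j" by (auto simp: \<tau>_def)
  define F where "F = filter (\<lambda>l. l \<noteq> i \<and> l \<noteq> j) [0..<Suc k]"
  have "a \<in> set F" "Suc a \<in> set F" using False sa by (auto simp: F_def)
  then have "\<not> distinct (map (nth xs) F)"
    using eq inj_onD[of "nth xs" "set F" a "Suc a"] by (auto simp: distinct_map)
  moreover have "length (map (nth xs) F) = k - 1"
    using length_filter_upt_neq2[OF ij] by (simp add: F_def)
  ultimately have "dCE_term B \<alpha> xs i j = 0"
    using alternatingD[OF al] ij len by (simp add: dCE_term_def F_def)
  then show ?thesis using fix_ij by simp
next
  case True
  have xs\<tau>: "xs ! \<tau> l = xs ! l" for l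
    using eq by (cases "l = a"; cases "l = Suc a") (auto simp: \<tau>_def)
  have "\<tau> i + \<tau> j = Suc (i + j) \<or> i + j = Suc (\<tau> i + \<tau> j)"
    using True ne ij by (elim disjE) (auto simp: \<tau>_def)
  then have sign: "(-1::complex) ^ (\<tau> i + \<tau> j) = - ((-1) ^ (i + j))" by auto
  have swap_eq: "l = \<tau> m \<longleftrightarrow> \<tau> l = m" for l m by (auto simp: \<tau>_def)
  have "map (nth xs) (filter (\<lambda>l. l \<noteq> \<tau> i \<and> l \<noteq> \<tau> j) [0..<length xs]) =
        map (nth xs) (filter (\<lambda>l. \<tau> l \<noteq> i \<and> \<tau> l \<noteq> j) [0..<length xs])"
    by (simp add: swap_eq)
  also have "\<dots> = map (nth xs) (filter (\<lambda>l. l \<noteq> i \<and> l \<noteq> j) [0..<length xs])"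
    unfolding \<tau>_def using sa len eq
    by (intro map_nth_filter_transpose_adjacent[of a "length xs" xs "\<lambda>l. l \<noteq> i \<and> l \<noteq> j"]) simp_all
  finally have rest: "map (nth xs) (filter (\<lambda>l. l \<noteq> \<tau> i \<and> l \<noteq> \<tau> j) [0..<length xs]) =
      map (nth xs) (filter (\<lambda>l. l \<noteq> i \<and> l \<noteq> j) [0..<length xs])" .
  show ?thesis unfolding dCE_term_def rest by (simp add: xs\<tau> sign)
qed

lemma dCE_adjacent_eq_0:
  assumes anti: "\<forall>x y. B x y = - B y x" and a: "multilinear k \<alpha>" and al: "alternating k \<alpha>"
    and len: "length xs = Suc k" and sa: "Suc a < Suc k" and eq: "xs ! a = xs ! Suc a"
  shows "dCE B k \<alpha> xs = 0"
proof -
  define \<tau> where "\<tau> = Transposition.transpose a (Suc a)"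
  define T where "T = (\<lambda>(i, j). dCE_term B \<alpha> xs i j)"
  define PP where "PP = Sigma {..<Suc k} (\<lambda>i. {i<..<Suc k})"
  define h where "h = (\<lambda>(i, j). if (i, j) = (a, Suc a) then (i, j) else (\<tau> i, \<tau> j))"
  have hP: "h p \<in> PP" if "p \<in> PP" for p
    using that sa by (cases p) (auto simp: h_def PP_def \<tau>_def Transposition.transpose_def)
  have hh: "h (h p) = p" if "p \<in> PP" for p
    using that by (cases p) (auto simp: h_def PP_def \<tau>_def Transposition.transpose_def)
  have Th: "T (h p) = - T p" if "p \<in> PP" for p
  proof (cases p)
    case (Pair i j)
    then show ?thesis
      using that dCE_term_adjacent_self[OF anti a len sa eq]
        dCE_term_transpose_adjacent[OF al len sa eq, of i j B]
      by (auto simp: T_def h_def PP_def \<tau>_def)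
  qed
  have "sum T PP = sum (\<lambda>p. T (h p)) PP"
    by (rule sum.reindex_bij_witness[where i=h and j=h]) (auto simp: hP hh)
  also have "\<dots> = - sum T PP" by (simp add: Th sum_negf)
  finally have "sum T PP = 0" by simp
  moreover have "dCE B k \<alpha> xs = sum T PP"
    unfolding dCE_eq_sum_dCE_term[OF len] T_def PP_def by (rule sum.Sigma) auto
  ultimately show ?thesis by simp
qed

lemma alternating_dCE:
  assumes "bilinear B" "\<forall>x y. B x y = - B y x" "multilinear k \<alpha>" "alternating k \<alpha>"
  shows "alternating (Suc k) (dCE B k \<alpha>)"
  by (rule alternatingI_adjacent[OF multilinear_dCE]) (use assms dCE_adjacent_eq_0 in auto)

section \<open>Vanishing in top degree\<close>

lemma unimodular_sum_brC_axis:
  fixes B :: "real^'m \<Rightarrow> real^'m \<Rightarrow> real^'m"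
  assumes B: "bilinear B" and anti: "\<forall>x y. B x y = - B y x" and un: "unimodular B"
  shows "(\<Sum>c\<in>UNIV. brC B (axis c 1) (axis d 1) $ c) = 0"
proof -
  have "(\<Sum>c\<in>UNIV. B (axis c 1) (axis d 1) $ c) = - (\<Sum>c\<in>UNIV. B (axis d 1) (axis c 1) $ c)"
  proof -
    have "B (axis c 1) (axis d 1) = - B (axis d 1) (axis c 1)" for c using anti by blast
    then show ?thesis by (simp add: sum_negf[symmetric])
  qed
  also have "(\<Sum>c\<in>UNIV. B (axis d 1) (axis c 1) $ c) = trace (matrix (B (axis d 1)))"
    by (simp add: trace_def matrix_def)
  finally have "(\<Sum>c\<in>UNIV. B (axis c 1) (axis d 1) $ c) = 0"
    using un by (simp add: unimodular_def)
  then show ?thesis by (simp add: brC_axis[OF B] flip: of_real_sum)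
qed

lemma filter_upt_neq: "i < N \<Longrightarrow> filter (\<lambda>l. l \<noteq> i) [0..<N] = [0..<i] @ [Suc i..<N]"
  by (simp add: upt_conv_append_Cons[of 0 i N] filter_id_conv)

lemma filter_upt_neq2:
  "i < j \<Longrightarrow> j < N \<Longrightarrow>
     filter (\<lambda>l. l \<noteq> i \<and> l \<noteq> j) [0..<N] = [0..<i] @ [Suc i..<j] @ [Suc j..<N]"
  by (simp add: upt_conv_append_Cons[of 0 i N] upt_conv_append_Cons[of "Suc i" j N] filter_id_conv)

lemma sum_square_eq_sum_pairs_less:
  fixes X :: "nat \<Rightarrow> nat \<Rightarrow> 'a::comm_monoid_add"
  assumes "\<And>i. X i i = 0"
  shows "(\<Sum>i<N. \<Sum>j<N. X i j) = (\<Sum>i<N. \<Sum>j\<in>{i<..<N}. X i j + X j i)"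
proof (induction N)
  case 0
  then show ?case by simp
next
  case (Suc N)
  have "{i<..<Suc N} = insert N {i<..<N}" if "i < N" for i using that by auto
  moreover have "{N<..<Suc N} = {}" by auto
  ultimately have "(\<Sum>i<Suc N. \<Sum>j\<in>{i<..<Suc N}. X i j + X j i)
      = (\<Sum>i<N. (X i N + X N i) + (\<Sum>j\<in>{i<..<N}. X i j + X j i))"
    by simp
  also have "\<dots> = (\<Sum>i<N. X i N) + (\<Sum>i<N. X N i) + (\<Sum>i<N. \<Sum>j<N. X i j)"
    by (simp add: sum.distrib Suc.IH)
  also have "\<dots> = (\<Sum>i<Suc N. \<Sum>j<Suc N. X i j)"
    using assms by (simp add: sum.distrib ac_simps)
  finally show ?case by simp
qed

lemma sum_UNIV_reindex_lessThan:
  assumes inj: "inj_on f {..<n}" and card: "CARD('m) = n"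
  shows "(\<Sum>c\<in>UNIV. g c) = (\<Sum>l<n. g (f l :: 'm::finite))"
proof -
  have "f ` {..<n} = UNIV"
    by (rule card_eq_UNIV_imp_eq_UNIV) (use inj card in \<open>auto simp: card_image\<close>)
  then show ?thesis using sum.reindex[OF inj, of g] by simp
qed

text \<open>On a basis, expanding the bracket leaves only its e_i and e_j components, and moving those to
  the front of the remaining arguments gives the two displayed terms.\<close>
lemma dCE_term_basis:
  fixes B :: "real^'m \<Rightarrow> real^'m \<Rightarrow> real^'m" and \<beta> :: "'m form" and f :: "nat \<Rightarrow> 'm"
  assumes anti: "\<forall>x y. B x y = - B y x" and a: "multilinear k \<beta>" and al: "alternating k \<beta>"
    and card: "CARD('m) = Suc k" and inj: "inj_on f {..<Suc k}" and ij: "i < j" "j < Suc k"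
  defines "e \<equiv> \<lambda>l. axis (f l) (1::complex)"
  shows "dCE_term B \<beta> (map e [0..<Suc k]) i j =
    (-1)^j * (brC B (e i) (e j) $ f i) * \<beta> (map e (filter (\<lambda>l. l \<noteq> j) [0..<Suc k])) +
    (-1)^i * (brC B (e j) (e i) $ f j) * \<beta> (map e (filter (\<lambda>l. l \<noteq> i) [0..<Suc k]))"
proof -
  define D where "D = (\<lambda>m. map e (filter (\<lambda>l. l \<noteq> m) [0..<Suc k]))"
  define R where "R = map e (filter (\<lambda>l. l \<noteq> i \<and> l \<noteq> j) [0..<Suc k])"
  define c where "c = (\<lambda>l. brC B (e i) (e j) $ f l)"
  have R: "R = map e ([0..<i] @ [Suc i..<j] @ [Suc j..<Suc k])"
    using filter_upt_neq2[OF ij] by (simp add: R_def del: upt_Suc)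
  have lenR: "Suc (length R) = k" using ij by (simp add: R)
  have "map (nth (map e [0..<Suc k])) (filter (\<lambda>l. l \<noteq> i \<and> l \<noteq> j) [0..<Suc k]) = R"
    by (simp add: R_def del: upt_Suc)
  then have summand: "dCE_term B \<beta> (map e [0..<Suc k]) i j = (-1)^(i+j) * \<beta> (brC B (e i) (e j) # R)"
    using ij by (simp add: dCE_term_def del: upt_Suc)
  have "brC B (e i) (e j) = (\<Sum>c\<in>UNIV. (brC B (e i) (e j) $ c) *s axis c 1)"
    by (simp add: basis_expansion)
  also have "\<dots> = (\<Sum>l<Suc k. c l *s e l)"
    unfolding sum_UNIV_reindex_lessThan[OF inj card] by (simp add: c_def e_def)
  finally have "\<beta> (brC B (e i) (e j) # R) = \<beta> ((\<Sum>l<Suc k. c l *s e l) # R)" by (simp only:)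
  also have "\<dots> = (\<Sum>l\<in>{i, j}. c l * \<beta> (e l # R))"
    using a al lenR ij by (intro alternating_cons_sum) (auto simp: R_def simp del: upt_Suc)
  also have "\<dots> = c i * \<beta> (e i # R) + c j * \<beta> (e j # R)" using ij by simp
  finally have expand: "\<beta> (brC B (e i) (e j) # R) = c i * \<beta> (e i # R) + c j * \<beta> (e j # R)" .
  have front_i: "\<beta> (e i # R) = (-1)^i * \<beta> (D j)"
    using alternating_move_to_front[OF a al lenR, of i "e i"] ij
    by (simp add: R D_def filter_upt_neq upt_conv_append_Cons[of 0 i j] del: upt_Suc)
  have front_j: "\<beta> (e j # R) = (-1)^(j - 1) * \<beta> (D i)"
    using alternating_move_to_front[OF a al lenR, of "j - 1" "e j"] ij
    by (simp add: R D_def filter_upt_neq upt_conv_append_Cons[of "Suc i" j "Suc k"] del: upt_Suc)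
  have antisym: "c j = - (brC B (e j) (e i) $ f j)"
    unfolding c_def using brC_antisym[OF anti, of "e i" "e j"] by simp
  obtain j' where j': "j = Suc j'" using ij by (cases j) auto
  have "dCE_term B \<beta> (map e [0..<Suc k]) i j = (-1)^(i+j) *
      (c i * ((-1)^i * \<beta> (D j)) + - (brC B (e j) (e i) $ f j) * ((-1)^(j - 1) * \<beta> (D i)))"
    by (simp only: summand expand front_i front_j antisym)
  also have "\<dots> = (-1)^j * c i * \<beta> (D j) + (-1)^i * (brC B (e j) (e i) $ f j) * \<beta> (D i)"
    unfolding j' by (auto simp: minus_one_power_iff algebra_simps)
  finally show ?thesis by (simp only: c_def D_def)
qed

lemma dCE_top_degree_basis:
  fixes B :: "real^'m \<Rightarrow> real^'m \<Rightarrow> real^'m" and \<beta> :: "'m form" and f :: "nat \<Rightarrow> 'm"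
  assumes B: "bilinear B" and anti: "\<forall>x y. B x y = - B y x" and un: "unimodular B"
    and a: "multilinear k \<beta>" and al: "alternating k \<beta>"
    and card: "CARD('m) = Suc k" and inj: "inj_on f {..<Suc k}"
  shows "dCE B k \<beta> (map (\<lambda>l. axis (f l) 1) [0..<Suc k]) = 0"
proof -
  define e where "e = (\<lambda>l. axis (f l) (1::complex) :: complex^'m)"
  define D where "D = (\<lambda>m. map e (filter (\<lambda>l. l \<noteq> m) [0..<Suc k]))"
  define X where "X = (\<lambda>i j. (-1::complex)^j * (brC B (e i) (e j) $ f i) * \<beta> (D j))"
  have trace: "(\<Sum>i<Suc k. brC B (e i) (e j) $ f i) = 0" for j
    using unimodular_sum_brC_axis[OF B anti un, of "f j"]
    unfolding sum_UNIV_reindex_lessThan[OF inj card] by (simp add: e_def)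
  have "dCE B k \<beta> (map e [0..<Suc k]) = (\<Sum>i<Suc k. \<Sum>j\<in>{i<..<Suc k}. X i j + X j i)"
    using dCE_term_basis[OF anti a al card inj]
    by (simp add: dCE_eq_sum_dCE_term X_def e_def D_def del: upt_Suc)
  also have "\<dots> = (\<Sum>i<Suc k. \<Sum>j<Suc k. X i j)"
    by (rule sum_square_eq_sum_pairs_less[symmetric]) (simp add: X_def brC_self[OF anti])
  also have "\<dots> = (\<Sum>j<Suc k. (-1)^j * \<beta> (D j) * (\<Sum>i<Suc k. brC B (e i) (e j) $ f i))"
    by (subst sum.swap) (simp add: X_def sum_distrib_left algebra_simps)
  also have "\<dots> = 0" by (simp only: trace) simp
  finally show ?thesis by (simp add: e_def)
qed

lemma dCE_top_degree_eq_0: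
  fixes B :: "real^'m \<Rightarrow> real^'m \<Rightarrow> real^'m" and \<beta> :: "'m form"
  assumes B: "bilinear B" and anti: "\<forall>x y. B x y = - B y x" and un: "unimodular B"
    and a: "multilinear k \<beta>" and al: "alternating k \<beta>" and card: "CARD('m) = Suc k"
    and len: "length xs = Suc k"
  shows "dCE B k \<beta> xs = 0"
proof (rule multilinear_eq_0_if_eq_0_on_axes[OF multilinear_dCE[OF B a] _ len])
  fix f :: "nat \<Rightarrow> 'm"
  show "dCE B k \<beta> (map (\<lambda>l. axis (f l) 1) [0..<Suc k]) = 0"
  proof (cases "inj_on f {..<Suc k}")
    case True
    then show ?thesis by (rule dCE_top_degree_basis[OF B anti un a al card])
  next
    case False
    then have "\<not> distinct (map (\<lambda>l. axis (f l) (1::complex) :: complex^'m) [0..<Suc k])"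
      by (auto simp: distinct_map inj_on_def axis_eq_axis atLeast0LessThan simp del: upt_Suc)
    then show ?thesis using alternatingD[OF alternating_dCE[OF B anti a al]] by simp
  qed
qed

lemma multilinear_delbar:
  assumes "bilinear B" "linear J" "multilinear k \<alpha>"
  shows "multilinear (Suc k) (delbar B J k \<alpha>)"
  unfolding delbar_def[abs_def]
  by (intro multilinear_sum multilinear_tcomp multilinear_dCE assms) simp

lemma alternating_delbar:
  assumes "bilinear B" "\<forall>x y. B x y = - B y x" "linear J" "multilinear k \<alpha>" "alternating k \<alpha>"
  shows "alternating (Suc k) (delbar B J k \<alpha>)"
  unfolding delbar_def[abs_def]
  by (intro alternating_sum alternating_tcomp alternating_dCE multilinear_dCE multilinear_tcomp assms)

lemma tcomp_eq_0: "(\<And>ys. length ys = length xs \<Longrightarrow> \<alpha> ys = 0) \<Longrightarrow> tcomp J p \<alpha> xs = 0"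
  unfolding tcomp_def by (auto intro!: sum.neutral)

lemma del_top_degree_eq_0:
  fixes B :: "real^'m \<Rightarrow> real^'m \<Rightarrow> real^'m" and \<gamma> :: "'m form"
  assumes B: "bilinear B" and anti: "\<forall>x y. B x y = - B y x" and un: "unimodular B"
    and J: "linear J" and a: "multilinear k \<gamma>" and al: "alternating k \<gamma>"
    and card: "CARD('m) = Suc k" and len: "length xs = Suc k"
  shows "del B J k \<gamma> xs = 0"
  unfolding del_def using len
  by (intro sum.neutral ballI tcomp_eq_0 dCE_top_degree_eq_0[OF B anti un _ _ card]
      multilinear_tcomp[OF J a] alternating_tcomp[OF J a al]) simp

theorem lemma1:
  fixes B :: "real^'m \<Rightarrow> real^'m \<Rightarrow> real^'m"
    and J :: "real^'m \<Rightarrow> real^'m"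
    and g :: "real^'m \<Rightarrow> real^'m \<Rightarrow> real"
    and n :: nat
  assumes "CARD('m) = 2 * n"
    and "is_lie_algebra B"
    and "unimodular B"
    and "hermitian_structure B J g"
  shows "\<forall>xs. length xs = 2 * n \<longrightarrow>
           del B J (2 * n - 1) (delbar B J (2 * n - 2) (kpow J g (n - 1))) xs = 0"
proof -
  have B: "bilinear B" and anti: "\<forall>x y. B x y = - B y x"
    using assms(2) unfolding is_lie_algebra_def by blast+
  have J: "linear J" and g: "bilinear g"
    using assms(4) unfolding hermitian_structure_def by blast+
  have "n \<noteq> 0" using assms(1) by (metis mult_0_right zero_less_card_finite less_irrefl)
  then obtain k where k: "2 * (n - 1) = k" "2 * n - 1 = Suc k" "2 * n - 2 = k" "2 * n = Suc (Suc k)"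
    by force
  let ?\<omega> = "kpow J g (n - 1)"
  have "multilinear k ?\<omega>" "alternating k ?\<omega>"
    using multilinear_kpow[OF J g, of "n - 1"] alternating_kpow[of "n - 1"] k(1) by simp_all
  then have "multilinear (Suc k) (delbar B J k ?\<omega>)" "alternating (Suc k) (delbar B J k ?\<omega>)"
    by (simp_all add: multilinear_delbar[OF B J] alternating_delbar[OF B anti J])
  then show ?thesis
    using del_top_degree_eq_0[OF B anti assms(3) J] assms(1) k by simp
qed

end
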